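(* If $\mathcal Q$ is a countable collection of probability measures on $\{0,1\}^{\mathbb N}$, then $\mathcal Q$ is UME-learnable.
   Context: $\{0,1\}^{\mathbb N}$ carries the product $\sigma$-algebra. For a probability measure $\mu$ on $\{0,1\}^{\mathbb N}$, $\mathrm{Mean}(\mu)\in[0,1]^{\mathbb N}$ is the vector whose $j$-th coordinate is $\mathbb E[X_j]$ for $X\sim\mu$. A collection $\mathcal Q$ of such measures is UME-learnable if there exist (measurable) estimators $\mathcal A_n:(\{0,1\}^{\mathbb N})^n\to[0,1]^{\mathbb N}$, $n\in\mathbb N$, such that for every $\mu\in\mathcal Q$, $\mathbb E_{S\sim\mu^n}\|\mathcal A_n(S)-\mathrm{Mean}(\mu)\|_\infty\to0$ as $n\to\infty$, where $S$ consists of $n$ i.i.d. draws from $\mu$. *)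

theory Defs
  imports "HOL-Probability.Probability"
begin

definition cantor_space :: "(nat \<Rightarrow> bool) measure" where
  "cantor_space = PiM UNIV (\<lambda>_. count_space UNIV)"

definition prob_on_cantor :: "(nat \<Rightarrow> bool) measure \<Rightarrow> bool" where
  "prob_on_cantor \<mu> \<longleftrightarrow> prob_space \<mu> \<and> sets \<mu> = sets cantor_space"

definition Mean :: "(nat \<Rightarrow> bool) measure \<Rightarrow> nat \<Rightarrow> real" where
  "Mean \<mu> j = (\<integral>x. (if x j then 1 else 0) \<partial>\<mu>)"

definition UME_learnable :: "(nat \<Rightarrow> bool) measure set \<Rightarrow> bool" where
  "UME_learnable Q \<longleftrightarrow>
     (\<exists>A :: nat \<Rightarrow> (nat \<Rightarrow> nat \<Rightarrow> bool) \<Rightarrow> nat \<Rightarrow> real.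
        (\<forall>n. A n \<in> PiM {..<n} (\<lambda>_. cantor_space) \<rightarrow>\<^sub>M PiM UNIV (\<lambda>_. borel)) \<and>
        (\<forall>n S j. A n S j \<in> {0..1}) \<and>
        (\<forall>\<mu>\<in>Q. (\<lambda>n. \<integral>S. (SUP j. \<bar>A n S j - Mean \<mu> j\<bar>) \<partial>(PiM {..<n} (\<lambda>_. \<mu>)))
                    \<longlonglongrightarrow> 0))"

end

theory Submission
  imports Defs "HOL-Real_Asymp.Real_Asymp"
begin

text \<open>Enumerate the mean vectors \<open>m 0, m 1, \<dots>\<close> of the measures in \<open>Q\<close>. Given \<open>n\<close> samples,
  fix for every pair \<open>a, b \<le> n\<close> a coordinate at which \<open>\<bar>m a - m b\<bar>\<close> comes within \<open>1/(n+1)\<close> of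
  its supremum, and output the first candidate whose means agree up to \<open>n powr (-1/4)\<close> with the
  empirical means on these at most \<open>(n+1)\<^sup>2\<close> test coordinates. If the truth is \<open>m t\<close> with
  \<open>t \<le> n\<close> and every test coordinate is estimated well, then \<open>t\<close> passes the test, so the
  chosen candidate \<open>a\<close> satisfies \<open>a \<le> t\<close>; comparing \<open>a\<close> and \<open>t\<close> at their test coordinate
  bounds the sup-distance by \<open>2 n powr (-1/4) + 1/(n+1)\<close>. By Hoeffding's inequality and a union
  bound the test fails with probability at most \<open>2 (n+1)\<^sup>2 exp (-2 sqrt n)\<close>, so the expected
  error tends to zero.\<close>

lemma distr_PiM_component_comp:
  assumes "prob_space M" "i \<in> I" "f \<in> M \<rightarrow>\<^sub>M N"
  shows "distr (PiM I (\<lambda>_. M)) N (\<lambda>S. f (S i)) = distr M N f"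
proof -
  have "distr (PiM I (\<lambda>_. M)) N (\<lambda>S. f (S i)) = distr (distr (PiM I (\<lambda>_. M)) M (\<lambda>S. S i)) N f"
    using assms by (subst distr_distr) (auto simp: comp_def)
  also have "distr (PiM I (\<lambda>_. M)) M (\<lambda>S. S i) = M"
    using assms by (intro distr_PiM_component) auto
  finally show ?thesis .
qed

lemma indep_vars_PiM_component_comp:
  assumes M: "prob_space M" and "finite I" and f: "f \<in> M \<rightarrow>\<^sub>M N"
  shows "prob_space.indep_vars (PiM I (\<lambda>_. M)) (\<lambda>_. N) (\<lambda>i S. f (S i)) I"
proof (cases "I = {}")
  case True
  with M show ?thesis
    by (simp add: prob_space.indep_vars_def prob_space.indep_sets_def prob_space_PiM)
next
  case False
  interpret P: prob_space "PiM I (\<lambda>_. M)" by (intro prob_space_PiM M)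
  have fN: "prob_space (distr M N f)" by (intro prob_space.prob_space_distr M f)
  show ?thesis
  proof (subst P.indep_vars_iff_distr_eq_PiM')
    have "distr (PiM I (\<lambda>_. M)) (PiM I (\<lambda>_. N)) (\<lambda>S. \<lambda>i\<in>I. f (S i))
        = distr (PiM I (\<lambda>_. M)) (PiM I (\<lambda>_. distr M N f)) (compose I f)"
      by (intro distr_cong sets_PiM_cong) (auto simp: compose_def)
    also have "\<dots> = PiM I (\<lambda>_. distr M (distr M N f) f)"
      using assms fN by (intro distr_PiM_finite_prob_space') auto
    also have "\<dots> = PiM I (\<lambda>i. distr (PiM I (\<lambda>_. M)) N (\<lambda>S. f (S i)))"
      using M f by (intro PiM_cong) (auto intro!: distr_cong simp: distr_PiM_component_comp)
    finally show "distr (PiM I (\<lambda>_. M)) (PiM I (\<lambda>_. N)) (\<lambda>S. \<lambda>i\<in>I. f (S i))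
        = PiM I (\<lambda>i. distr (PiM I (\<lambda>_. M)) N (\<lambda>S. f (S i)))" .
  qed (use False f in auto)
qed

lemma (in prob_space) prob_empirical_mean_deviation_ge:
  fixes f :: "'a \<Rightarrow> real" and n :: nat
  assumes f[measurable]: "f \<in> borel_measurable M" and range: "AE x in M. f x \<in> {a..b}"
    and "a < b" "n > 0" "\<delta> \<ge> 0"
  shows "measure (PiM {..<n} (\<lambda>_. M))
           {S \<in> space (PiM {..<n} (\<lambda>_. M)). \<delta> \<le> \<bar>(\<Sum>i<n. f (S i)) / real n - expectation f\<bar>}
         \<le> 2 * exp (- 2 * real n * \<delta>\<^sup>2 / (b - a)\<^sup>2)"
proof -
  let ?P = "PiM {..<n} (\<lambda>_. M)"
  interpret P: prob_space ?P by (intro prob_space_PiM prob_space_axioms)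
  have first[measurable]: "(\<lambda>S. S 0) \<in> ?P \<rightarrow>\<^sub>M M"
    using \<open>n > 0\<close> by (intro measurable_component_singleton) auto
  have distr_first: "distr ?P M (\<lambda>S. S 0) = M"
    using \<open>n > 0\<close> by (intro distr_PiM_component prob_space_axioms) auto
  interpret H: Hoeffding_ineq_iid ?P "{..<n}" "\<lambda>i S. f (S i)" "\<lambda>S. f (S 0)" a b
     "P.expectation (\<lambda>S. f (S 0))"
  proof unfold_locales
    show "P.indep_vars (\<lambda>_. borel) (\<lambda>i S. f (S i)) {..<n}"
      by (intro indep_vars_PiM_component_comp prob_space_axioms f) simp
    show "distr ?P borel (\<lambda>S. f (S i)) = distr ?P borel (\<lambda>S. f (S 0))" if "i \<in> {..<n}" for i
      using that \<open>n > 0\<close> by (simp only: distr_PiM_component_comp[OF prob_space_axioms _ f] lessThan_iff)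
    have "AE x in distr ?P M (\<lambda>S. S 0). f x \<in> {a..b}"
      using range by (simp only: distr_first)
    moreover have "{x \<in> space M. f x \<in> {a..b}} \<in> sets M" by measurable
    ultimately show "AE S in ?P. f (S 0) \<in> {a..b}"
      by (simp only: AE_distr_iff[OF first])
  qed simp_all
  have mean: "P.expectation (\<lambda>S. f (S 0)) = expectation f"
    by (subst integral_distr[symmetric, OF first f]) (simp only: distr_first)
  have "{..<n} \<noteq> {}" using \<open>n > 0\<close> by auto
  from H.Hoeffding_ineq_abs_ge'[OF \<open>\<delta> \<ge> 0\<close> \<open>a < b\<close> this] show ?thesis
    unfolding mean card_lessThan .
qed

lemma exists_nearly_maximal:
  fixes g :: "'a \<Rightarrow> real"
  assumes bdd: "bdd_above (range g)" and "\<epsilon> > 0"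
  shows "\<exists>j. \<forall>j'. g j' < g j + \<epsilon>"
proof -
  obtain j where j: "(SUP j. g j) - \<epsilon> < g j"
    using less_cSUP_iff[OF _ bdd, of "(SUP j. g j) - \<epsilon>"] \<open>\<epsilon> > 0\<close> by auto
  have "g j' \<le> (SUP j. g j)" for j'
    by (rule cSUP_upper[OF _ bdd]) simp
  with j show ?thesis by (metis add.commute diff_less_eq order_le_less_trans)
qed

definition coord :: "nat \<Rightarrow> (nat \<Rightarrow> bool) \<Rightarrow> real" where
  "coord j x = (if x j then 1 else 0)"

lemma coord_in_unit_interval: "coord j x \<in> {0..1}"
  by (simp add: coord_def)

lemma measurable_coord:
  assumes "sets M = sets cantor_space"
  shows "coord j \<in> borel_measurable M"
proof -
  have "coord j \<in> borel_measurable cantor_space"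
    unfolding coord_def cantor_space_def by measurable
  then show ?thesis by (simp add: measurable_cong_sets[OF assms])
qed

lemma Mean_eq_integral_coord: "Mean \<mu> j = (\<integral>x. coord j x \<partial>\<mu>)"
  by (simp add: Mean_def coord_def)

lemma Mean_in_unit_interval:
  assumes "prob_on_cantor \<mu>"
  shows "Mean \<mu> j \<in> {0..1}"
proof -
  interpret prob_space \<mu> using assms by (simp add: prob_on_cantor_def)
  have meas: "coord j \<in> borel_measurable \<mu>"
    using assms by (intro measurable_coord) (simp add: prob_on_cantor_def)
  have "0 \<le> coord j x" "coord j x \<le> 1" for x
    using coord_in_unit_interval[of j x] by simp_all
  then have "0 \<le> expectation (coord j) \<and> expectation (coord j) \<le> 1"
    by (auto intro!: integral_nonneg_AE integral_le_const integrable_const_bound[where B=1] meas)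
  then show ?thesis by (simp add: Mean_eq_integral_coord)
qed

definition empirical_mean :: "nat \<Rightarrow> nat \<Rightarrow> (nat \<Rightarrow> nat \<Rightarrow> bool) \<Rightarrow> real" where
  "empirical_mean n j S = (\<Sum>i<n. coord j (S i)) / real n"

lemma measurable_empirical_mean:
  assumes "sets M = sets cantor_space"
  shows "empirical_mean n j \<in> borel_measurable (PiM {..<n} (\<lambda>_. M))"
proof -
  have [measurable]: "coord j \<in> borel_measurable M"
    using assms by (rule measurable_coord)
  show ?thesis unfolding empirical_mean_def by measurable
qed

lemma prob_empirical_mean_far_from_Mean:
  assumes \<mu>: "prob_on_cantor \<mu>" and "n > 0" "\<delta> \<ge> 0"
  shows "measure (PiM {..<n} (\<lambda>_. \<mu>))
           {S \<in> space (PiM {..<n} (\<lambda>_. \<mu>)). \<delta> \<le> \<bar>empirical_mean n j S - Mean \<mu> j\<bar>}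
         \<le> 2 * exp (- 2 * real n * \<delta>\<^sup>2)"
proof -
  interpret prob_space \<mu> using \<mu> by (simp add: prob_on_cantor_def)
  have "coord j \<in> borel_measurable \<mu>"
    using \<mu> by (intro measurable_coord) (simp add: prob_on_cantor_def)
  moreover have "AE x in \<mu>. coord j x \<in> {0..1}"
    by (intro AE_I2) (rule coord_in_unit_interval)
  ultimately show ?thesis
    using prob_empirical_mean_deviation_ge[of "coord j" 0 1 n \<delta>] \<open>n > 0\<close> \<open>\<delta> \<ge> 0\<close>
    by (simp add: coord_in_unit_interval empirical_mean_def Mean_eq_integral_coord)
qed

definition separating_coord :: "(nat \<Rightarrow> nat \<Rightarrow> real) \<Rightarrow> nat \<Rightarrow> nat \<Rightarrow> nat \<Rightarrow> nat" where
  "separating_coord m n a b =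
     (SOME j. \<forall>j'. \<bar>m a j' - m b j'\<bar> < \<bar>m a j - m b j\<bar> + 1 / (real n + 1))"

definition test_coords :: "(nat \<Rightarrow> nat \<Rightarrow> real) \<Rightarrow> nat \<Rightarrow> nat set" where
  "test_coords m n = (\<lambda>(a, b). separating_coord m n a b) ` ({..n} \<times> {..n})"

definition tolerance :: "nat \<Rightarrow> real" where
  "tolerance n = real n powr (- 1 / 4)"

definition consistent_candidate ::
    "(nat \<Rightarrow> nat \<Rightarrow> real) \<Rightarrow> nat \<Rightarrow> nat \<Rightarrow> (nat \<Rightarrow> nat \<Rightarrow> bool) \<Rightarrow> bool" where
  "consistent_candidate m n a S \<longleftrightarrow>
     (\<forall>j\<in>test_coords m n. \<bar>empirical_mean n j S - m a j\<bar> < tolerance n)"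

definition mean_estimator ::
    "(nat \<Rightarrow> nat \<Rightarrow> real) \<Rightarrow> nat \<Rightarrow> (nat \<Rightarrow> nat \<Rightarrow> bool) \<Rightarrow> nat \<Rightarrow> real" where
  "mean_estimator m n S =
     (if \<exists>a. consistent_candidate m n a S then m (LEAST a. consistent_candidate m n a S)
      else (\<lambda>_. 0))"

definition error_bound :: "nat \<Rightarrow> real" where
  "error_bound n = 2 * tolerance n + 1 / (real n + 1)
     + real ((n + 1)\<^sup>2) * (2 * exp (- 2 * real n * (tolerance n)\<^sup>2))"

lemma separating_coord_nearly_maximal:
  assumes m: "\<And>a j. m a j \<in> {0..1}"
  shows "\<bar>m a j - m b j\<bar> < \<bar>m a (separating_coord m n a b) - m b (separating_coord m n a b)\<bar>
           + 1 / (real n + 1)"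
proof -
  have "\<bar>m a j - m b j\<bar> \<le> 1" for j
    using m[of a j] m[of b j] by (auto simp: abs_le_iff)
  then have "bdd_above (range (\<lambda>j. \<bar>m a j - m b j\<bar>))"
    by (intro bdd_aboveI[where M=1]) auto
  then have "\<exists>c. \<forall>j. \<bar>m a j - m b j\<bar> < \<bar>m a c - m b c\<bar> + 1 / (real n + 1)"
    by (rule exists_nearly_maximal) simp
  then show ?thesis
    unfolding separating_coord_def by (rule someI_ex[THEN spec])
qed

lemma finite_test_coords: "finite (test_coords m n)"
  by (simp add: test_coords_def)

lemma card_test_coords_le: "card (test_coords m n) \<le> (n + 1)\<^sup>2"
  unfolding test_coords_def
  using card_image_le[of "{..n} \<times> {..n}" "\<lambda>(a, b). separating_coord m n a b"]
  by (simp add: card_cartesian_product power2_eq_square)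

lemma mean_estimator_in_unit_interval:
  assumes "\<And>a j. m a j \<in> {0..1}"
  shows "mean_estimator m n S j \<in> {0..1}"
  using assms by (simp add: mean_estimator_def)

lemma measurable_mean_estimator:
  "mean_estimator m n \<in> PiM {..<n} (\<lambda>_. cantor_space) \<rightarrow>\<^sub>M PiM UNIV (\<lambda>_. borel)"
proof -
  have [measurable]: "empirical_mean n j \<in> borel_measurable (PiM {..<n} (\<lambda>_. cantor_space))" for j
    by (rule measurable_empirical_mean) simp
  have [measurable]: "Measurable.pred (PiM {..<n} (\<lambda>_. cantor_space)) (consistent_candidate m n a)" for a
    unfolding consistent_candidate_def using finite_test_coords by measurable
  have "(\<lambda>S. mean_estimator m n S j) \<in> borel_measurable (PiM {..<n} (\<lambda>_. cantor_space))" for j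
    unfolding mean_estimator_def by measurable
  then show ?thesis
    by (intro measurable_PiM_single') simp_all
qed

lemma mean_estimator_close:
  assumes m: "\<And>a j. m a j \<in> {0..1}" and "t \<le> n"
    and good: "\<forall>j\<in>test_coords m n. \<bar>empirical_mean n j S - m t j\<bar> < tolerance n"
  shows "\<bar>mean_estimator m n S j - m t j\<bar> \<le> 2 * tolerance n + 1 / (real n + 1)"
proof -
  have t: "consistent_candidate m n t S"
    using good by (simp add: consistent_candidate_def)
  define a where "a = (LEAST a. consistent_candidate m n a S)"
  have a: "consistent_candidate m n a S"
    unfolding a_def by (rule LeastI[of "\<lambda>a. consistent_candidate m n a S", OF t])
  have "a \<le> t"
    unfolding a_def by (rule Least_le[of "\<lambda>a. consistent_candidate m n a S", OF t])
  define c where "c = separating_coord m n a t"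
  have "c \<in> test_coords m n"
    unfolding c_def test_coords_def using \<open>a \<le> t\<close> \<open>t \<le> n\<close> by auto
  then have "\<bar>empirical_mean n c S - m a c\<bar> < tolerance n" "\<bar>empirical_mean n c S - m t c\<bar> < tolerance n"
    using a good by (auto simp: consistent_candidate_def)
  moreover have "\<bar>m a j - m t j\<bar> < \<bar>m a c - m t c\<bar> + 1 / (real n + 1)"
    unfolding c_def by (rule separating_coord_nearly_maximal[OF m])
  moreover have "mean_estimator m n S j = m a j"
    using t by (auto simp: mean_estimator_def a_def)
  ultimately show ?thesis by linarith
qed

lemma error_bound_tendsto_zero: "error_bound \<longlonglongrightarrow> 0"
  unfolding error_bound_def tolerance_def by real_asymp

definition badly_estimated ::
    "(nat \<Rightarrow> nat \<Rightarrow> real) \<Rightarrow> (nat \<Rightarrow> bool) measure \<Rightarrow> nat \<Rightarrow> (nat \<Rightarrow> nat \<Rightarrow> bool) set" where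
  "badly_estimated m \<mu> n = {S \<in> space (PiM {..<n} (\<lambda>_. \<mu>)).
     \<exists>j\<in>test_coords m n. tolerance n \<le> \<bar>empirical_mean n j S - Mean \<mu> j\<bar>}"

lemma badly_estimated_in_sets:
  assumes "prob_on_cantor \<mu>"
  shows "badly_estimated m \<mu> n \<in> sets (PiM {..<n} (\<lambda>_. \<mu>))"
proof -
  have [measurable]: "empirical_mean n j \<in> borel_measurable (PiM {..<n} (\<lambda>_. \<mu>))" for j
    using assms by (intro measurable_empirical_mean) (simp add: prob_on_cantor_def)
  show ?thesis
    unfolding badly_estimated_def using finite_test_coords by measurable
qed

lemma measure_badly_estimated_le:
  assumes \<mu>: "prob_on_cantor \<mu>" and "n > 0"
  shows "measure (PiM {..<n} (\<lambda>_. \<mu>)) (badly_estimated m \<mu> n)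
           \<le> real ((n + 1)\<^sup>2) * (2 * exp (- 2 * real n * (tolerance n)\<^sup>2))"
proof -
  let ?P = "PiM {..<n} (\<lambda>_. \<mu>)"
  define far where "far j = {S \<in> space ?P. tolerance n \<le> \<bar>empirical_mean n j S - Mean \<mu> j\<bar>}" for j
  have [measurable]: "empirical_mean n j \<in> borel_measurable ?P" for j
    using \<mu> by (intro measurable_empirical_mean) (simp add: prob_on_cantor_def)
  have far_sets: "far j \<in> sets ?P" for j
    unfolding far_def by measurable
  have "badly_estimated m \<mu> n = (\<Union>j\<in>test_coords m n. far j)"
    by (auto simp: badly_estimated_def far_def)
  then have "measure ?P (badly_estimated m \<mu> n) \<le> (\<Sum>j\<in>test_coords m n. measure ?P (far j))"
    by (simp add: measure_UNION_le[OF finite_test_coords far_sets])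
  also have "\<dots> \<le> (\<Sum>j\<in>test_coords m n. 2 * exp (- 2 * real n * (tolerance n)\<^sup>2))"
    unfolding far_def
    by (intro sum_mono prob_empirical_mean_far_from_Mean \<mu> \<open>n > 0\<close>) (simp add: tolerance_def)
  also have "\<dots> \<le> real ((n + 1)\<^sup>2) * (2 * exp (- 2 * real n * (tolerance n)\<^sup>2))"
    using card_test_coords_le[of m n] by (simp del: of_nat_power)
  finally show ?thesis .
qed

lemma sup_error_le_indicator_badly_estimated:
  assumes m: "\<And>a j. m a j \<in> {0..1}" and t: "Mean \<mu> = m t" "t \<le> n"
    and S: "S \<in> space (PiM {..<n} (\<lambda>_. \<mu>))"
  shows "(SUP j. \<bar>mean_estimator m n S j - Mean \<mu> j\<bar>)
           \<le> 2 * tolerance n + 1 / (real n + 1) + indicator (badly_estimated m \<mu> n) S"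
proof (rule cSUP_least)
  fix j
  show "\<bar>mean_estimator m n S j - Mean \<mu> j\<bar>
          \<le> 2 * tolerance n + 1 / (real n + 1) + indicator (badly_estimated m \<mu> n) S"
  proof (cases "S \<in> badly_estimated m \<mu> n")
    case True
    have "\<bar>mean_estimator m n S j - Mean \<mu> j\<bar> \<le> 1"
      using mean_estimator_in_unit_interval[of m n S j, OF m] m[of t j]
      by (auto simp: t abs_le_iff)
    moreover have "0 \<le> 2 * tolerance n + 1 / (real n + 1)"
      by (simp add: tolerance_def)
    ultimately show ?thesis
      using True by simp
  next
    case False
    then have "\<forall>j\<in>test_coords m n. \<bar>empirical_mean n j S - m t j\<bar> < tolerance n"
      using S by (auto simp: badly_estimated_def t not_le)
    from mean_estimator_close[OF m \<open>t \<le> n\<close> this] False show ?thesis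
      by (simp add: t)
  qed
qed simp

lemma expected_error_le_error_bound:
  assumes m: "\<And>a j. m a j \<in> {0..1}" and \<mu>: "prob_on_cantor \<mu>"
    and t: "Mean \<mu> = m t" "t \<le> n" and "n > 0"
  shows "(\<integral>S. (SUP j. \<bar>mean_estimator m n S j - Mean \<mu> j\<bar>) \<partial>PiM {..<n} (\<lambda>_. \<mu>)) \<le> error_bound n"
proof -
  let ?P = "PiM {..<n} (\<lambda>_. \<mu>)"
  let ?B = "badly_estimated m \<mu> n"
  let ?C = "2 * tolerance n + 1 / (real n + 1)"
  interpret P: prob_space ?P
    using \<mu> by (intro prob_space_PiM) (simp add: prob_on_cantor_def)
  have B: "?B \<in> sets ?P"
    using \<mu> by (rule badly_estimated_in_sets)
  then have "integrable ?P (\<lambda>S. ?C + indicator ?B S)"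
    by (auto simp: P.emeasure_eq_measure)
  then have "(\<integral>S. (SUP j. \<bar>mean_estimator m n S j - Mean \<mu> j\<bar>) \<partial>?P) \<le> (\<integral>S. ?C + indicator ?B S \<partial>?P)"
    by (intro integral_mono' sup_error_le_indicator_badly_estimated[where m=m, OF m t])
       (auto simp: indicator_def tolerance_def)
  also have "\<dots> = ?C + measure ?P ?B"
    using B by (simp add: P.emeasure_eq_measure P.prob_space)
  finally show ?thesis
    using measure_badly_estimated_le[OF \<mu> \<open>n > 0\<close>, of m] by (simp add: error_bound_def)
qed

lemma sup_dist_unit_cube_nonneg:
  fixes x y :: "nat \<Rightarrow> real"
  assumes "\<And>j. x j \<in> {0..1}" "\<And>j. y j \<in> {0..1}"
  shows "0 \<le> (SUP j. \<bar>x j - y j\<bar>)"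
proof -
  have "\<bar>x j - y j\<bar> \<le> 1" for j
    using assms[of j] by (auto simp: abs_le_iff)
  then have "bdd_above (range (\<lambda>j. \<bar>x j - y j\<bar>))"
    by (intro bdd_aboveI[where M=1]) auto
  then show ?thesis
    by (rule cSUP_upper2[of _ _ 0]) simp_all
qed

lemma mean_estimator_consistent:
  assumes m: "\<And>a j. m a j \<in> {0..1}" and \<mu>: "prob_on_cantor \<mu>" and t: "Mean \<mu> = m t"
  shows "(\<lambda>n. \<integral>S. (SUP j. \<bar>mean_estimator m n S j - Mean \<mu> j\<bar>) \<partial>PiM {..<n} (\<lambda>_. \<mu>)) \<longlonglongrightarrow> 0"
proof (rule tendsto_sandwich[OF _ _ tendsto_const error_bound_tendsto_zero])
  show "\<forall>\<^sub>F n in sequentially.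
          0 \<le> (\<integral>S. (SUP j. \<bar>mean_estimator m n S j - Mean \<mu> j\<bar>) \<partial>PiM {..<n} (\<lambda>_. \<mu>))"
    using m Mean_in_unit_interval[OF \<mu>]
    by (intro always_eventually allI integral_nonneg_AE AE_I2 sup_dist_unit_cube_nonneg
        mean_estimator_in_unit_interval)
  show "\<forall>\<^sub>F n in sequentially.
          (\<integral>S. (SUP j. \<bar>mean_estimator m n S j - Mean \<mu> j\<bar>) \<partial>PiM {..<n} (\<lambda>_. \<mu>)) \<le> error_bound n"
    unfolding eventually_sequentially
    by (intro exI[of _ "Suc t"] allI impI expected_error_le_error_bound[where m=m, OF m \<mu> t]) auto
qed

lemma UME_learnable_if_means_enumerated:
  fixes m :: "nat \<Rightarrow> nat \<Rightarrow> real"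
  assumes m: "\<And>a j. m a j \<in> {0..1}"
    and Q: "\<And>\<mu>. \<mu> \<in> Q \<Longrightarrow> prob_on_cantor \<mu> \<and> Mean \<mu> \<in> range m"
  shows "UME_learnable Q"
  unfolding UME_learnable_def
proof (intro exI[of _ "mean_estimator m"] conjI allI ballI)
  show "mean_estimator m n \<in> PiM {..<n} (\<lambda>_. cantor_space) \<rightarrow>\<^sub>M PiM UNIV (\<lambda>_. borel)" for n
    by (rule measurable_mean_estimator)
  show "mean_estimator m n S j \<in> {0..1}" for n S j
    using m by (rule mean_estimator_in_unit_interval)
  show "(\<lambda>n. \<integral>S. (SUP j. \<bar>mean_estimator m n S j - Mean \<mu> j\<bar>) \<partial>PiM {..<n} (\<lambda>_. \<mu>)) \<longlonglongrightarrow> 0"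
    if "\<mu> \<in> Q" for \<mu>
    using Q[OF that] mean_estimator_consistent[OF m] by fastforce
qed

theorem theorem1:
  fixes Q :: "(nat \<Rightarrow> bool) measure set"
  assumes "countable Q"
    and "\<forall>\<mu>\<in>Q. prob_on_cantor \<mu>"
  shows "UME_learnable Q"
proof (cases "Q = {}")
  case True
  then show ?thesis
    by (intro UME_learnable_if_means_enumerated[of "\<lambda>_ _. 0"]) auto
next
  case False
  show ?thesis
  proof (rule UME_learnable_if_means_enumerated[of "\<lambda>a. Mean (from_nat_into Q a)"])
    show "Mean (from_nat_into Q a) j \<in> {0..1}" for a j
      using assms(2) from_nat_into[OF False] by (blast intro: Mean_in_unit_interval)
    show "prob_on_cantor \<mu> \<and> Mean \<mu> \<in> range (\<lambda>a. Mean (from_nat_into Q a))" if "\<mu> \<in> Q" for \<mu>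
      using assms that from_nat_into_surj[OF assms(1) that] by (metis rangeI)
  qed
qed

end
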